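(* Let $X$, $A$, $B$, $C$, $\varepsilon$, $a$, $b$, $c$, $d$ be as in the context and define $Y$, $(\cdot|\cdot)$, $H$, $\hat B$, $V$ as in the context. Then: (i) $(Y,(\cdot|\cdot))$ is a complex Hilbert space. (ii) $H$ is densely defined, linear and self-adjoint in $Y$. (iii) $\hat B$ is linear; if $B$ is symmetric then $\hat B$ is symmetric; if $B$ is bounded then $\hat B$ is bounded and $|\hat B|\leqslant\|B\|$. (iv) $H+\hat B$ is closed; if $B$ is symmetric then $H+\hat B$ is self-adjoint. (v) $V$ is linear and bounded with $|V|\leqslant(c^2+d^2/\varepsilon)^{1/2}$.
   Context: $(X,\langle\cdot|\cdot\rangle)$ is a nontrivial complex Hilbert space with norm $\|\cdot\|$. $A:D(A)\to X$ is a densely defined self-adjoint linear operator with $\langle\xi|A\xi\rangle\geqslant\varepsilon\langle\xi|\xi\rangle$ for all $\xi\in D(A)$ for some $\varepsilon\in(0,\infty)$; $A^{1/2}$ is its positive self-adjoint square root. $B:D(A^{1/2})\to X$ is linear with $\|B\xi\|^2\leqslant a^2\|A^{1/2}\xi\|^2+b^2\|\xi\|^2$ for all $\xi\in D(A^{1/2})$, for some $a\in[0,1)$, $b\in\mathbb{R}$. $C:D(A^{1/2})\to X$ is linear with $\|C\xi\|^2\leqslant c^2\|A^{1/2}\xi\|^2+d^2\|\xi\|^2$ for all $\xi\in D(A^{1/2})$, for some real $c,d$. $Y:=D(A^{1/2})\times X$ with $(\xi|\eta):=\langle A^{1/2}\xi_1|A^{1/2}\eta_1\rangle+\langle\xi_2|\eta_2\rangle$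 for $\xi=(\xi_1,\xi_2),\eta=(\eta_1,\eta_2)\in Y$; $|\cdot|$ denotes the induced norm and operator norms on $Y$, $\|B\|$ the operator norm on $X$. $H:D(A)\times D(A^{1/2})\to Y$, $H\xi:=(-i\xi_2,iA\xi_1)$; $\hat B:D(H)\to Y$, $\hat B\xi:=(0,-B\xi_2)$; $V:Y\to Y$, $V\xi:=(0,iC\xi_1)$. *)

theory Defs
  imports "HOL-Analysis.Analysis"
begin

text \<open>A (possibly non-closed-under-the-whole-type) complex inner product space is
given by a complex scalar multiplication sc on an abelian group type, a carrier
set W and a sesquilinear form ip (conjugate linear in the first, linear in the
second argument, as in the bra-ket notation of the paper).\<close>

definition hnorm :: "('a \<Rightarrow> 'a \<Rightarrow> complex) \<Rightarrow> 'a \<Rightarrow> real" where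
  "hnorm ip x = sqrt (Re (ip x x))"

definition csubspace :: "(complex \<Rightarrow> 'a::ab_group_add \<Rightarrow> 'a) \<Rightarrow> 'a set \<Rightarrow> bool" where
  "csubspace sc D \<longleftrightarrow> 0 \<in> D \<and> (\<forall>x\<in>D. \<forall>y\<in>D. x + y \<in> D) \<and> (\<forall>c. \<forall>x\<in>D. sc c x \<in> D)"

definition hilbert_space ::
  "(complex \<Rightarrow> 'a::ab_group_add \<Rightarrow> 'a) \<Rightarrow> 'a set \<Rightarrow> ('a \<Rightarrow> 'a \<Rightarrow> complex) \<Rightarrow> bool" where
  "hilbert_space sc W ip \<longleftrightarrow>
     vector_space sc \<and> csubspace sc W \<and>
     (\<forall>x\<in>W. \<forall>y\<in>W. \<forall>z\<in>W. ip x (y + z) = ip x y + ip x z) \<and>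
     (\<forall>x\<in>W. \<forall>y\<in>W. \<forall>c. ip x (sc c y) = c * ip x y) \<and>
     (\<forall>x\<in>W. \<forall>y\<in>W. ip y x = cnj (ip x y)) \<and>
     (\<forall>x\<in>W. 0 \<le> Re (ip x x)) \<and>
     (\<forall>x\<in>W. ip x x = 0 \<longrightarrow> x = 0) \<and>
     (\<forall>f::nat \<Rightarrow> 'a. (\<forall>n. f n \<in> W) \<and>
          (\<forall>e>0. \<exists>N. \<forall>m\<ge>N. \<forall>n\<ge>N. hnorm ip (f m - f n) < e)
        \<longrightarrow> (\<exists>l\<in>W. (\<lambda>n. hnorm ip (f n - l)) \<longlonglongrightarrow> 0))"

definition lin_op :: "(complex \<Rightarrow> 'a::ab_group_add \<Rightarrow> 'a) \<Rightarrow> 'a set \<Rightarrow> 'a set \<Rightarrow> ('a \<Rightarrow> 'a) \<Rightarrow> bool" where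
  "lin_op sc W D T \<longleftrightarrow> csubspace sc D \<and> D \<subseteq> W \<and> T ` D \<subseteq> W \<and>
     (\<forall>x\<in>D. \<forall>y\<in>D. T (x + y) = T x + T y) \<and> (\<forall>c. \<forall>x\<in>D. T (sc c x) = sc c (T x))"

definition dense_in :: "('a::ab_group_add \<Rightarrow> 'a \<Rightarrow> complex) \<Rightarrow> 'a set \<Rightarrow> 'a set \<Rightarrow> bool" where
  "dense_in ip W D \<longleftrightarrow> D \<subseteq> W \<and> (\<forall>x\<in>W. \<forall>e>0. \<exists>y\<in>D. hnorm ip (x - y) < e)"

definition symmetric_op ::
  "(complex \<Rightarrow> 'a::ab_group_add \<Rightarrow> 'a) \<Rightarrow> 'a set \<Rightarrow> ('a \<Rightarrow> 'a \<Rightarrow> complex) \<Rightarrow> 'a set \<Rightarrow> ('a \<Rightarrow> 'a) \<Rightarrow> bool" where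
  "symmetric_op sc W ip D T \<longleftrightarrow> lin_op sc W D T \<and> dense_in ip W D \<and>
     (\<forall>x\<in>D. \<forall>y\<in>D. ip (T x) y = ip x (T y))"

definition adj_dom :: "'a set \<Rightarrow> ('a \<Rightarrow> 'a \<Rightarrow> complex) \<Rightarrow> 'a set \<Rightarrow> ('a \<Rightarrow> 'a) \<Rightarrow> 'a set" where
  "adj_dom W ip D T = {y\<in>W. \<exists>z\<in>W. \<forall>x\<in>D. ip (T x) y = ip x z}"

definition selfadjoint_op ::
  "(complex \<Rightarrow> 'a::ab_group_add \<Rightarrow> 'a) \<Rightarrow> 'a set \<Rightarrow> ('a \<Rightarrow> 'a \<Rightarrow> complex) \<Rightarrow> 'a set \<Rightarrow> ('a \<Rightarrow> 'a) \<Rightarrow> bool" where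
  "selfadjoint_op sc W ip D T \<longleftrightarrow> symmetric_op sc W ip D T \<and> adj_dom W ip D T = D"

definition bounded_op :: "('a \<Rightarrow> 'a \<Rightarrow> complex) \<Rightarrow> 'a set \<Rightarrow> ('a \<Rightarrow> 'a) \<Rightarrow> bool" where
  "bounded_op ip D T \<longleftrightarrow> (\<exists>M. \<forall>x\<in>D. hnorm ip (T x) \<le> M * hnorm ip x)"

definition op_norm :: "('a \<Rightarrow> 'a \<Rightarrow> complex) \<Rightarrow> 'a set \<Rightarrow> ('a \<Rightarrow> 'a) \<Rightarrow> real" where
  "op_norm ip D T = Inf {M. 0 \<le> M \<and> (\<forall>x\<in>D. hnorm ip (T x) \<le> M * hnorm ip x)}"

definition closed_op :: "('a::ab_group_add \<Rightarrow> 'a \<Rightarrow> complex) \<Rightarrow> 'a set \<Rightarrow> 'a set \<Rightarrow> ('a \<Rightarrow> 'a) \<Rightarrow> bool" where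
  "closed_op ip W D T \<longleftrightarrow>
     (\<forall>f x y. (\<forall>n. f n \<in> D) \<and> x \<in> W \<and> y \<in> W \<and>
        (\<lambda>n. hnorm ip (f n - x)) \<longlonglongrightarrow> 0 \<and> (\<lambda>n. hnorm ip (T (f n) - y)) \<longlonglongrightarrow> 0
        \<longrightarrow> x \<in> D \<and> T x = y)"

text \<open>The energy space Y = D(A^(1/2)) x X and its structure; S stands for A^(1/2).\<close>
definition scaleY :: "(complex \<Rightarrow> 'a \<Rightarrow> 'a) \<Rightarrow> complex \<Rightarrow> 'a \<times> 'a \<Rightarrow> 'a \<times> 'a" where
  "scaleY sc c \<xi> = (sc c (fst \<xi>), sc c (snd \<xi>))"

definition ipY :: "('a \<Rightarrow> 'a \<Rightarrow> complex) \<Rightarrow> ('a \<Rightarrow> 'a) \<Rightarrow> 'a \<times> 'a \<Rightarrow> 'a \<times> 'a \<Rightarrow> complex" where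
  "ipY ip S \<xi> \<eta> = ip (S (fst \<xi>)) (S (fst \<eta>)) + ip (snd \<xi>) (snd \<eta>)"

definition opH :: "(complex \<Rightarrow> 'a \<Rightarrow> 'a) \<Rightarrow> ('a \<Rightarrow> 'a) \<Rightarrow> 'a \<times> 'a \<Rightarrow> 'a \<times> 'a" where
  "opH sc A \<xi> = (sc (- \<i>) (snd \<xi>), sc \<i> (A (fst \<xi>)))"

definition opBhat :: "('a::ab_group_add \<Rightarrow> 'a) \<Rightarrow> 'a \<times> 'a \<Rightarrow> 'a \<times> 'a" where
  "opBhat B \<xi> = (0, - B (snd \<xi>))"

definition opV :: "(complex \<Rightarrow> 'a::ab_group_add \<Rightarrow> 'a) \<Rightarrow> ('a \<Rightarrow> 'a) \<Rightarrow> 'a \<times> 'a \<Rightarrow> 'a \<times> 'a" where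
  "opV sc C \<xi> = (0, sc \<i> (C (fst \<xi>)))"

end

(*
  Everything rests on one fact: a self-adjoint operator T with c |u| <= |T u| (c > 0) is onto.
  Its range is closed (the bound makes preimages of Cauchy sequences Cauchy, and the graph of T
  is closed), and a vector r orthogonal to the range lies in the domain of the adjoint, which
  is D(T), with T r = 0, hence r = 0; so the closest point of the range to any w is w itself.

  Applied to A, this gives A(D(A)) = X. Writing x = A u = S(S u) then yields the lower bound
  eps |x|^2 <= |S x|^2 on D(S), and S(D(A)) = D(S). The lower bound makes the energy norm
  equivalent to the graph norm of S, so Y is complete, and it turns the (c, d)-bound on C
  into the bound on V. S(D(A)) = D(S) makes D(A) x D(S) dense in Y. The adjoint domain of
  H + B^ is computed by testing against (x1, 0) and (0, x2); closedness follows from the closed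
  graphs of A and S together with the S-boundedness of B.
*)
theory Submission
  imports Defs
begin

section \<open>Inner products and norms\<close>

locale complex_hilbert_space =
  fixes sc :: "complex \<Rightarrow> 'x::ab_group_add \<Rightarrow> 'x" and ip :: "'x \<Rightarrow> 'x \<Rightarrow> complex"
  assumes hilbert: "hilbert_space sc UNIV ip"
begin

lemma vector_space: "vector_space sc"
  using hilbert unfolding hilbert_space_def by (elim conjE)

sublocale vs: vector_space sc by (rule vector_space)

abbreviation nrm :: "'x \<Rightarrow> real" where "nrm \<equiv> hnorm ip"

lemma ip_add_right: "ip x (y + z) = ip x y + ip x z"
  and ip_scale_right: "ip x (sc c y) = c * ip x y"
  and ip_cnj_commute: "ip y x = cnj (ip x y)"
  and ip_self_nonneg: "0 \<le> Re (ip x x)"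
  and ip_self_eq_0D: "ip x x = 0 \<Longrightarrow> x = 0"
  using hilbert unfolding hilbert_space_def by (elim conjE; metis UNIV_I)+

lemma ip_add_left: "ip (x + y) z = ip x z + ip y z"
  by (subst (1 2 3) ip_cnj_commute) (simp add: ip_add_right)

lemma ip_scale_left: "ip (sc c x) y = cnj c * ip x y"
  by (subst (1 2) ip_cnj_commute) (simp add: ip_scale_right)

lemma ip_zero_right [simp]: "ip x 0 = 0"
  using ip_add_right[of x 0 0] by simp

lemma ip_zero_left [simp]: "ip 0 x = 0"
  using ip_add_left[of 0 0 x] by simp

lemma ip_minus_right: "ip x (- y) = - ip x y"
  using ip_add_right[of x y "- y"] by (simp add: eq_neg_iff_add_eq_0 add.commute)

lemma ip_minus_left: "ip (- x) y = - ip x y"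
  using ip_add_left[of x "- x" y] by (simp add: eq_neg_iff_add_eq_0 add.commute)

lemma ip_diff_right: "ip x (y - z) = ip x y - ip x z"
  unfolding diff_conv_add_uminus ip_add_right ip_minus_right by simp

lemma ip_diff_left: "ip (x - y) z = ip x z - ip y z"
  unfolding diff_conv_add_uminus ip_add_left ip_minus_left by simp

lemma nrm_nonneg [simp]: "0 \<le> nrm x"
  by (simp add: hnorm_def ip_self_nonneg)

lemma nrm_sq: "(nrm x)\<^sup>2 = Re (ip x x)"
  by (simp add: hnorm_def ip_self_nonneg)

lemma ip_self_eq_nrm_sq: "ip x x = complex_of_real ((nrm x)\<^sup>2)"
proof -
  have "Im (ip x x) = 0"
    using ip_cnj_commute[of x x] by (metis cnj.simps(2) complex.sel(2) neg_equal_zero)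
  then show ?thesis by (simp add: nrm_sq complex_eq_iff)
qed

lemma nrm_eq_0_iff [simp]: "nrm x = 0 \<longleftrightarrow> x = 0"
proof
  assume "nrm x = 0"
  then show "x = 0" using ip_self_eq_0D ip_self_eq_nrm_sq[of x] by simp
qed (simp add: hnorm_def)

lemma nrm_zero [simp]: "nrm 0 = 0"
  by simp

lemma nrm_scale: "nrm (sc c x) = cmod c * nrm x"
proof -
  have "ip (sc c x) (sc c x) = (cnj c * c) * ip x x"
    by (simp add: ip_scale_left ip_scale_right)
  moreover have "cnj c * c = complex_of_real ((cmod c)\<^sup>2)"
    by (subst complex_norm_square) (rule mult.commute)
  ultimately have "Re (ip (sc c x) (sc c x)) = (cmod c)\<^sup>2 * Re (ip x x)"
    by simp
  then show ?thesis by (simp add: hnorm_def real_sqrt_mult)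
qed

lemma nrm_minus: "nrm (- x) = nrm x"
  using nrm_scale[of "- 1" x] by simp

lemma nrm_commute: "nrm (x - y) = nrm (y - x)"
  by (metis minus_diff_eq nrm_minus)

lemma nrm_add_sq: "(nrm (x + y))\<^sup>2 = (nrm x)\<^sup>2 + (nrm y)\<^sup>2 + 2 * Re (ip x y)"
proof -
  have "ip (x + y) (x + y) = ip x x + ip y y + (ip x y + cnj (ip x y))"
    by (simp add: ip_add_left ip_add_right ip_cnj_commute[of x y])
  then show ?thesis by (simp add: nrm_sq)
qed

lemma nrm_diff_sq: "(nrm (x - y))\<^sup>2 = (nrm x)\<^sup>2 + (nrm y)\<^sup>2 - 2 * Re (ip x y)"
  using nrm_add_sq[of x "- y"] by (simp add: nrm_minus ip_minus_right)

lemma parallelogram: "(nrm (x - y))\<^sup>2 + (nrm (x + y))\<^sup>2 = 2 * (nrm x)\<^sup>2 + 2 * (nrm y)\<^sup>2"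
  by (simp add: nrm_diff_sq nrm_add_sq)

lemma nrm_sq_minus_projection:
  "(nrm (x - sc (ip y x / complex_of_real ((nrm y)\<^sup>2)) y))\<^sup>2
     = (nrm x)\<^sup>2 - (cmod (ip y x))\<^sup>2 / (nrm y)\<^sup>2"
proof (cases "y = 0")
  case False
  define p where "p = ip y x"
  define Y where "Y = (nrm y)\<^sup>2"
  define t where "t = p / complex_of_real Y"
  have Y: "Y > 0" using False by (simp add: Y_def)
  have pc: "p * cnj p = complex_of_real ((cmod p)\<^sup>2)"
    by (rule complex_norm_square[symmetric])
  have "Re (ip x (sc t y)) = (cmod p)\<^sup>2 / Y"
    by (simp add: ip_scale_right ip_cnj_commute[of x y] p_def[symmetric] t_def pc)
  moreover have "(nrm (sc t y))\<^sup>2 = (cmod p)\<^sup>2 / Y"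
  proof -
    have "(nrm (sc t y))\<^sup>2 = (cmod t)\<^sup>2 * Y" by (simp add: nrm_scale power_mult_distrib Y_def)
    also have "\<dots> = (cmod p)\<^sup>2 / Y\<^sup>2 * Y" using Y by (simp add: t_def norm_divide power_divide)
    finally show ?thesis using Y by (simp add: power2_eq_square)
  qed
  ultimately show ?thesis
    by (simp add: nrm_diff_sq p_def[symmetric] Y_def[symmetric] t_def[symmetric])
qed simp

lemma Cauchy_Schwarz: "cmod (ip x y) \<le> nrm x * nrm y"
proof (cases "y = 0")
  case False
  have "0 \<le> (nrm x)\<^sup>2 - (cmod (ip y x))\<^sup>2 / (nrm y)\<^sup>2"
    using nrm_sq_minus_projection[of x y] by (metis zero_le_power2)
  then have "(cmod (ip y x))\<^sup>2 \<le> (nrm x * nrm y)\<^sup>2"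
    using False by (simp add: pos_divide_le_eq power_mult_distrib)
  then have "cmod (ip y x) \<le> nrm x * nrm y"
    by (rule power2_le_imp_le) simp
  then show ?thesis by (simp add: ip_cnj_commute[of x y])
qed simp

lemma Re_ip_le: "Re (ip x y) \<le> nrm x * nrm y"
  using complex_Re_le_cmod[of "ip x y"] Cauchy_Schwarz[of x y] by linarith

lemma nrm_triangle: "nrm (x + y) \<le> nrm x + nrm y"
proof -
  have "Re (ip x y) \<le> nrm x * nrm y" by (rule Re_ip_le)
  then have "(nrm (x + y))\<^sup>2 \<le> (nrm x + nrm y)\<^sup>2"
    by (simp add: nrm_add_sq power2_sum)
  then show ?thesis by (rule power2_le_imp_le) simp
qed

lemma nrm_reverse_triangle: "\<bar>nrm x - nrm y\<bar> \<le> nrm (x - y)"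
  using nrm_triangle[of "x - y" y] nrm_triangle[of "y - x" x] nrm_commute[of x y] by simp

lemma op_norm_nonneg_and_bound:
  assumes T: "bounded_op ip D T"
  shows "0 \<le> op_norm ip D T" and "x \<in> D \<Longrightarrow> nrm (T x) \<le> op_norm ip D T * nrm x"
proof -
  define Ms where "Ms = {M. 0 \<le> M \<and> (\<forall>x\<in>D. nrm (T x) \<le> M * nrm x)}"
  obtain M where M: "\<forall>x\<in>D. nrm (T x) \<le> M * nrm x" using T unfolding bounded_op_def by blast
  have "\<forall>x\<in>D. nrm (T x) \<le> max M 0 * nrm x"
    using M by (meson max.cobounded1 mult_right_mono nrm_nonneg order_trans)
  then have "max M 0 \<in> Ms" unfolding Ms_def by simp
  then have ne: "Ms \<noteq> {}" by blast
  show "0 \<le> op_norm ip D T"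
    unfolding op_norm_def Ms_def[symmetric] using ne by (rule cInf_greatest) (simp add: Ms_def)
  assume x: "x \<in> D"
  show "nrm (T x) \<le> op_norm ip D T * nrm x"
  proof (cases "x = 0")
    case True
    then show ?thesis using bspec[OF M x] by simp
  next
    case False
    then have pos: "0 < nrm x" using nrm_nonneg[of x] nrm_eq_0_iff[of x] by linarith
    have "nrm (T x) / nrm x \<le> Inf Ms"
      using ne x pos by (intro cInf_greatest) (auto simp: Ms_def pos_divide_le_eq)
    then show ?thesis using pos by (simp add: op_norm_def Ms_def pos_divide_le_eq)
  qed
qed

definition converges_to :: "(nat \<Rightarrow> 'x) \<Rightarrow> 'x \<Rightarrow> bool" where
  "converges_to f l \<longleftrightarrow> (\<lambda>n. nrm (f n - l)) \<longlonglongrightarrow> 0"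

definition seq_closed :: "'x set \<Rightarrow> bool" where
  "seq_closed M \<longleftrightarrow> (\<forall>f l. (\<forall>n. f n \<in> M) \<and> converges_to f l \<longrightarrow> l \<in> M)"

lemma Cauchy_converges:
  assumes "\<forall>e>0. \<exists>N. \<forall>m\<ge>N. \<forall>n\<ge>N. nrm (f m - f n) < e"
  shows "\<exists>l. converges_to f l"
  using hilbert assms unfolding hilbert_space_def converges_to_def by (elim conjE) (metis UNIV_I)

lemma converges_toI_dominated:
  assumes "\<And>n. nrm (f n - l) \<le> u n" and "u \<longlonglongrightarrow> 0"
  shows "converges_to f l"
  unfolding converges_to_def using assms(1)
  by (intro Lim_null_comparison[OF always_eventually assms(2)]) simp

lemma converges_to_const: "converges_to (\<lambda>n. l) l"
  by (simp add: converges_to_def)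

lemma converges_to_add:
  assumes "converges_to f l" and "converges_to g m"
  shows "converges_to (\<lambda>n. f n + g n) (l + m)"
proof (rule converges_toI_dominated)
  show "nrm (f n + g n - (l + m)) \<le> nrm (f n - l) + nrm (g n - m)" for n
    using nrm_triangle[of "f n - l" "g n - m"] by (simp add: algebra_simps)
  show "(\<lambda>n. nrm (f n - l) + nrm (g n - m)) \<longlonglongrightarrow> 0"
    using assms unfolding converges_to_def by (rule tendsto_add_zero)
qed

lemma converges_to_scale:
  assumes "converges_to f l"
  shows "converges_to (\<lambda>n. sc c (f n)) (sc c l)"
proof (rule converges_toI_dominated)
  show "nrm (sc c (f n) - sc c l) \<le> cmod c * nrm (f n - l)" for n
    by (simp add: vs.scale_right_diff_distrib[symmetric] nrm_scale)
  show "(\<lambda>n. cmod c * nrm (f n - l)) \<longlonglongrightarrow> 0"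
    using assms unfolding converges_to_def by (rule tendsto_mult_right_zero)
qed

lemma converges_to_diff:
  assumes "converges_to f l" and "converges_to g m"
  shows "converges_to (\<lambda>n. f n - g n) (l - m)"
  using converges_to_add[OF assms(1) converges_to_scale[OF assms(2), of "- 1"]] by simp

lemma converges_to_nrm:
  assumes "converges_to f l"
  shows "(\<lambda>n. nrm (f n)) \<longlonglongrightarrow> nrm l"
proof -
  have "(\<lambda>n. nrm (f n) - nrm l) \<longlonglongrightarrow> 0"
  proof (rule Lim_null_comparison[OF always_eventually])
    show "\<forall>n. norm (nrm (f n) - nrm l) \<le> nrm (f n - l)"
      using nrm_reverse_triangle by simp
    show "(\<lambda>n. nrm (f n - l)) \<longlonglongrightarrow> 0"
      using assms by (simp add: converges_to_def)
  qed
  then show ?thesis by (simp add: LIM_zero_iff)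
qed

lemma converges_to_ip:
  assumes f: "converges_to f l" and g: "converges_to g m"
  shows "(\<lambda>n. ip (f n) (g n)) \<longlonglongrightarrow> ip l m"
proof -
  have bound: "cmod (ip (f n) (g n) - ip l m) \<le> nrm (f n - l) * nrm (g n) + nrm l * nrm (g n - m)"
    for n
  proof -
    have "ip (f n) (g n) - ip l m = ip (f n - l) (g n) + ip l (g n - m)"
      by (simp add: ip_diff_left ip_diff_right)
    then show ?thesis
      using norm_triangle_ineq[of "ip (f n - l) (g n)" "ip l (g n - m)"]
        Cauchy_Schwarz[of "f n - l" "g n"] Cauchy_Schwarz[of l "g n - m"] by simp
  qed
  have "(\<lambda>n. nrm (f n - l)) \<longlonglongrightarrow> 0" and "(\<lambda>n. nrm (g n - m)) \<longlonglongrightarrow> 0"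
    using f g by (simp_all add: converges_to_def)
  from tendsto_add[OF tendsto_mult[OF this(1) converges_to_nrm[OF g]] tendsto_mult[OF tendsto_const this(2)]]
  have "(\<lambda>n. nrm (f n - l) * nrm (g n) + nrm l * nrm (g n - m)) \<longlonglongrightarrow> 0"
    by simp
  then have "(\<lambda>n. ip (f n) (g n) - ip l m) \<longlonglongrightarrow> 0"
    by (rule Lim_null_comparison[OF always_eventually, rotated]) (simp add: bound)
  then show ?thesis by (simp add: LIM_zero_iff)
qed

lemma converges_to_Cauchy:
  assumes "converges_to f l" and "e > 0"
  shows "\<exists>N. \<forall>m\<ge>N. \<forall>n\<ge>N. nrm (f m - f n) < e"
proof -
  obtain N where N: "\<And>n. n \<ge> N \<Longrightarrow> nrm (f n - l) < e / 2"
    using assms LIMSEQ_D[of "\<lambda>n. nrm (f n - l)" 0 "e / 2"] unfolding converges_to_def by auto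
  have "nrm (f m - f n) < e" if "m \<ge> N" "n \<ge> N" for m n
    using nrm_triangle[of "f m - l" "l - f n"] nrm_commute[of l "f n"] N[OF that(1)] N[OF that(2)]
    by simp
  then show ?thesis by blast
qed

lemma converges_if_Cauchy_dominated:
  assumes dom: "\<And>m n. nrm (f m - f n) \<le> K * nrm (g m - g n)" and g: "converges_to g v"
  shows "\<exists>l. converges_to f l"
proof (rule Cauchy_converges, intro allI impI)
  fix e :: real
  assume e: "e > 0"
  define K' where "K' = \<bar>K\<bar> + 1"
  have K': "K' > 0" by (simp add: K'_def add_pos_nonneg)
  obtain N where N: "\<forall>m\<ge>N. \<forall>n\<ge>N. nrm (g m - g n) < e / K'"
    using converges_to_Cauchy[OF g, of "e / K'"] e K' by auto
  have "nrm (f m - f n) < e" if "m \<ge> N" "n \<ge> N" for m n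
  proof -
    have "K * nrm (g m - g n) \<le> K' * nrm (g m - g n)"
      unfolding K'_def by (intro mult_right_mono) auto
    then have "nrm (f m - f n) \<le> K' * nrm (g m - g n)"
      using dom[of m n] by linarith
    also have "\<dots> < K' * (e / K')"
      using N that K' by (intro mult_strict_left_mono) auto
    finally show ?thesis using K' by simp
  qed
  then show "\<exists>N. \<forall>m\<ge>N. \<forall>n\<ge>N. nrm (f m - f n) < e" by blast
qed

lemma dense_in_converging_seq:
  assumes "dense_in ip UNIV D"
  shows "\<exists>xs. (\<forall>n. xs n \<in> D) \<and> converges_to xs v"
proof -
  have "\<forall>n. \<exists>y\<in>D. nrm (v - y) < inverse (real (Suc n))"
    using assms unfolding dense_in_def by simp
  then obtain xs where xs: "\<And>n. xs n \<in> D" "\<And>n. nrm (v - xs n) < inverse (real (Suc n))"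
    by metis
  have "converges_to xs v"
  proof (rule converges_toI_dominated)
    show "nrm (xs n - v) \<le> inverse (real (Suc n))" for n
      using xs(2)[of n] nrm_commute[of "xs n" v] by simp
  qed (rule LIMSEQ_inverse_real_of_nat)
  then show ?thesis using xs(1) by blast
qed

lemma dense_in_orthogonal_eq_0:
  assumes "dense_in ip UNIV D" and "\<And>x. x \<in> D \<Longrightarrow> ip x v = 0"
  shows "v = 0"
proof -
  obtain xs where xs: "\<And>n. xs n \<in> D" "converges_to xs v"
    using dense_in_converging_seq[OF assms(1)] by blast
  have "(\<lambda>n. ip (xs n) v) \<longlonglongrightarrow> ip v v"
    by (rule converges_to_ip[OF xs(2) converges_to_const])
  then have "ip v v = 0" using xs(1) assms(2) by (simp add: LIMSEQ_const_iff)
  then show ?thesis by (rule ip_self_eq_0D)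
qed

lemma csubspace_add: "csubspace sc D \<Longrightarrow> x \<in> D \<Longrightarrow> y \<in> D \<Longrightarrow> x + y \<in> D"
  and csubspace_scale: "csubspace sc D \<Longrightarrow> x \<in> D \<Longrightarrow> sc c x \<in> D"
  and csubspace_zero: "csubspace sc D \<Longrightarrow> 0 \<in> D"
  by (simp_all add: csubspace_def)

lemma csubspace_minus: "csubspace sc D \<Longrightarrow> x \<in> D \<Longrightarrow> - x \<in> D"
  using csubspace_scale[of D x "- 1"] by simp

lemma csubspace_diff: "csubspace sc D \<Longrightarrow> x \<in> D \<Longrightarrow> y \<in> D \<Longrightarrow> x - y \<in> D"
  using csubspace_add[of D x "- y"] csubspace_minus[of D y] by simp

lemma lin_op_csubspace: "lin_op sc W D T \<Longrightarrow> csubspace sc D"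
  and lin_op_add: "lin_op sc W D T \<Longrightarrow> x \<in> D \<Longrightarrow> y \<in> D \<Longrightarrow> T (x + y) = T x + T y"
  and lin_op_scale: "lin_op sc W D T \<Longrightarrow> x \<in> D \<Longrightarrow> T (sc c x) = sc c (T x)"
  by (simp_all add: lin_op_def)

lemma lin_op_zero: "lin_op sc W D T \<Longrightarrow> T 0 = 0"
  using lin_op_scale[of W D T 0 0] csubspace_zero[OF lin_op_csubspace] by simp

lemma lin_op_minus: "lin_op sc W D T \<Longrightarrow> x \<in> D \<Longrightarrow> T (- x) = - T x"
  using lin_op_scale[of W D T x "- 1"] by simp

lemma lin_op_diff: "lin_op sc W D T \<Longrightarrow> x \<in> D \<Longrightarrow> y \<in> D \<Longrightarrow> T (x - y) = T x - T y"
  using lin_op_add[of W D T x "- y"] lin_op_minus[of W D T y] csubspace_minus[OF lin_op_csubspace]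
  by fastforce

lemma lin_op_image_csubspace:
  assumes T: "lin_op sc W D T"
  shows "csubspace sc (T ` D)"
proof -
  have D: "csubspace sc D" using T by (rule lin_op_csubspace)
  have "0 \<in> T ` D"
    using lin_op_zero[OF T] csubspace_zero[OF D] by (metis image_eqI)
  moreover have "T x + T y \<in> T ` D" if "x \<in> D" "y \<in> D" for x y
    using lin_op_add[OF T that] csubspace_add[OF D that] by (metis image_eqI)
  moreover have "sc c (T x) \<in> T ` D" if "x \<in> D" for c x
    using lin_op_scale[OF T that] csubspace_scale[OF D that] by (metis image_eqI)
  ultimately show ?thesis unfolding csubspace_def by blast
qed

lemma lin_op_image: "lin_op sc' W D T \<Longrightarrow> x \<in> D \<Longrightarrow> T x \<in> W"
  unfolding lin_op_def by blast

lemma csubspace_UNIV: "csubspace sc UNIV"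
  by (simp add: csubspace_def)

lemma csubspace_Times:
  "csubspace sc D1 \<Longrightarrow> csubspace sc D2 \<Longrightarrow> csubspace (scaleY sc) (D1 \<times> D2)"
  unfolding csubspace_def scaleY_def by (auto simp: zero_prod_def)

lemma selfadjoint_op_lin: "selfadjoint_op sc UNIV ip D T \<Longrightarrow> lin_op sc UNIV D T"
  and selfadjoint_op_dense: "selfadjoint_op sc UNIV ip D T \<Longrightarrow> dense_in ip UNIV D"
  and selfadjoint_op_sym:
    "selfadjoint_op sc UNIV ip D T \<Longrightarrow> x \<in> D \<Longrightarrow> y \<in> D \<Longrightarrow> ip (T x) y = ip x (T y)"
  by (simp_all add: selfadjoint_op_def symmetric_op_def)

lemma selfadjoint_op_adj_domI:
  "selfadjoint_op sc UNIV ip D T \<Longrightarrow> (\<And>x. x \<in> D \<Longrightarrow> ip (T x) y = ip x z) \<Longrightarrow> y \<in> D"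
  unfolding selfadjoint_op_def adj_dom_def by blast

lemma selfadjoint_op_graph_closed:
  assumes T: "selfadjoint_op sc UNIV ip D T" and f: "\<forall>n. f n \<in> D"
    and x: "converges_to f x" and y: "converges_to (\<lambda>n. T (f n)) y"
  shows "x \<in> D" and "T x = y"
proof -
  have adj: "ip (T z) x = ip z y" if z: "z \<in> D" for z
  proof -
    have "(\<lambda>n. ip (T z) (f n)) \<longlonglongrightarrow> ip (T z) x"
      by (rule converges_to_ip[OF converges_to_const x])
    moreover have "(\<lambda>n. ip (T z) (f n)) = (\<lambda>n. ip z (T (f n)))"
      using selfadjoint_op_sym[OF T z] f by simp
    moreover have "(\<lambda>n. ip z (T (f n))) \<longlonglongrightarrow> ip z y"
      by (rule converges_to_ip[OF converges_to_const y])
    ultimately show ?thesis using LIMSEQ_unique by metis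
  qed
  then show xD: "x \<in> D" by (rule selfadjoint_op_adj_domI[OF T])
  have "ip z (T x - y) = 0" if "z \<in> D" for z
    using adj[OF that] selfadjoint_op_sym[OF T that xD] by (simp add: ip_diff_right)
  then have "T x - y = 0" by (rule dense_in_orthogonal_eq_0[OF selfadjoint_op_dense[OF T]])
  then show "T x = y" by simp
qed

lemma form_bound_imp_nrm_bound:
  assumes "c * (nrm u)\<^sup>2 \<le> Re (ip u v)"
  shows "c * nrm u \<le> nrm v"
proof (cases "u = 0")
  case False
  have "c * (nrm u)\<^sup>2 \<le> nrm u * nrm v"
    using assms Re_ip_le[of u v] by linarith
  then have "nrm u * (c * nrm u) \<le> nrm u * nrm v"
    by (simp add: power2_eq_square mult_ac)
  then show ?thesis using False by (simp add: less_le)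
qed simp

section \<open>Self-adjoint operators bounded below are onto\<close>

lemma converges_if_sq_dist_le_null:
  assumes dist: "\<And>m n. (nrm (f m - f n))\<^sup>2 \<le> u m + u n" and u: "u \<longlonglongrightarrow> 0"
  shows "\<exists>l. converges_to f l"
proof (rule Cauchy_converges, intro allI impI)
  fix e :: real
  assume e: "e > 0"
  then obtain N where N: "\<And>n. n \<ge> N \<Longrightarrow> \<bar>u n\<bar> < e\<^sup>2 / 2"
    using LIMSEQ_D[OF u, of "e\<^sup>2 / 2"] by auto
  have "nrm (f m - f n) < e" if "m \<ge> N" "n \<ge> N" for m n
  proof (rule power2_less_imp_less)
    show "(nrm (f m - f n))\<^sup>2 < e\<^sup>2"
      using dist[of m n] N[OF that(1)] N[OF that(2)] by linarith
  qed (use e in simp)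
  then show "\<exists>N. \<forall>m\<ge>N. \<forall>n\<ge>N. nrm (f m - f n) < e" by blast
qed

lemma orthogonal_if_nrm_minimal:
  assumes min: "\<And>s. nrm r \<le> nrm (r - sc s y)"
  shows "ip y r = 0"
proof (cases "y = 0")
  case False
  have "(nrm r)\<^sup>2 \<le> (nrm (r - sc (ip y r / complex_of_real ((nrm y)\<^sup>2)) y))\<^sup>2"
    using min by (intro power_mono) simp_all
  also have "\<dots> = (nrm r)\<^sup>2 - (cmod (ip y r))\<^sup>2 / (nrm y)\<^sup>2"
    by (rule nrm_sq_minus_projection)
  finally show ?thesis using False by (simp add: divide_le_0_iff)
qed simp

lemma closest_point_orthogonal:
  assumes M: "csubspace sc M" and m: "m \<in> M"
    and min: "\<And>m'. m' \<in> M \<Longrightarrow> nrm (w - m) \<le> nrm (w - m')" and y: "y \<in> M"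
  shows "ip y (w - m) = 0"
proof (rule orthogonal_if_nrm_minimal)
  fix s
  have "m + sc s y \<in> M" using M m y by (intro csubspace_add csubspace_scale)
  from min[OF this] show "nrm (w - m) \<le> nrm (w - m - sc s y)"
    by (metis diff_diff_eq)
qed

lemma parallelogram_dist_bound:
  assumes M: "csubspace sc M" and a: "a \<in> M" and b: "b \<in> M"
    and low: "\<And>m. m \<in> M \<Longrightarrow> \<delta> \<le> (nrm (w - m))\<^sup>2"
  shows "(nrm (a - b))\<^sup>2 \<le> 2 * (nrm (w - a))\<^sup>2 + 2 * (nrm (w - b))\<^sup>2 - 4 * \<delta>"
proof -
  define mid where "mid = sc (1 / 2) (a + b)"
  have "mid \<in> M" unfolding mid_def using M a b by (intro csubspace_scale csubspace_add)
  have two: "sc 2 x = x + x" for x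
    using vs.scale_left_distrib[of 1 1 x] by simp
  have "(w - a) + (w - b) = sc 2 (w - mid)"
    by (simp add: mid_def vs.scale_right_diff_distrib two algebra_simps)
  then have "(nrm ((w - a) + (w - b)))\<^sup>2 = 4 * (nrm (w - mid))\<^sup>2"
    by (simp add: nrm_scale power_mult_distrib)
  moreover have "(nrm ((w - a) - (w - b)))\<^sup>2 = (nrm (a - b))\<^sup>2"
    using nrm_commute[of b a] by simp
  ultimately show ?thesis
    using parallelogram[of "w - a" "w - b"] low[OF \<open>mid \<in> M\<close>] by linarith
qed

lemma closest_point_exists:
  assumes M: "csubspace sc M"
    and closed: "seq_closed M"
  shows "\<exists>m\<in>M. \<forall>m'\<in>M. nrm (w - m) \<le> nrm (w - m')"
proof -
  define \<delta> where "\<delta> = Inf ((\<lambda>m. (nrm (w - m))\<^sup>2) ` M)"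
  have ne: "(\<lambda>m. (nrm (w - m))\<^sup>2) ` M \<noteq> {}" using csubspace_zero[OF M] by blast
  have low: "\<delta> \<le> (nrm (w - m))\<^sup>2" if "m \<in> M" for m
    unfolding \<delta>_def using that by (intro cInf_lower bdd_belowI[of _ 0]) auto
  have "\<exists>m\<in>M. (nrm (w - m))\<^sup>2 < \<delta> + inverse (real (Suc n))" for n
    using cInf_lessD[OF ne, of "\<delta> + inverse (real (Suc n))"] unfolding \<delta>_def by simp
  then obtain ms where ms: "\<And>n. ms n \<in> M"
    and ms_min: "\<And>n. (nrm (w - ms n))\<^sup>2 < \<delta> + inverse (real (Suc n))"
    by metis
  have "(nrm (ms i - ms j))\<^sup>2 \<le> 2 * inverse (real (Suc i)) + 2 * inverse (real (Suc j))" for i j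
    using parallelogram_dist_bound[OF M ms ms low, of i j] ms_min[of i] ms_min[of j] by linarith
  moreover have "(\<lambda>n. 2 * inverse (real (Suc n))) \<longlonglongrightarrow> 0"
    using tendsto_mult_right_zero[OF LIMSEQ_inverse_real_of_nat] by simp
  ultimately have "\<exists>m. converges_to ms m"
    by (rule converges_if_sq_dist_le_null)
  then obtain m where m: "converges_to ms m" ..
  have "m \<in> M" using closed ms m unfolding seq_closed_def by blast
  have "(\<lambda>n. (nrm (w - ms n))\<^sup>2) \<longlonglongrightarrow> (nrm (w - m))\<^sup>2"
    by (intro tendsto_power converges_to_nrm converges_to_diff[OF converges_to_const m])
  moreover have "(\<lambda>n. \<delta> + inverse (real (Suc n))) \<longlonglongrightarrow> \<delta>"
    using tendsto_add[OF tendsto_const[of \<delta>] LIMSEQ_inverse_real_of_nat] by simp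
  ultimately have "(nrm (w - m))\<^sup>2 \<le> \<delta>"
    by (rule LIMSEQ_le) (use ms_min less_imp_le in blast)
  have "nrm (w - m) \<le> nrm (w - m')" if "m' \<in> M" for m'
  proof (rule power2_le_imp_le)
    show "(nrm (w - m))\<^sup>2 \<le> (nrm (w - m'))\<^sup>2"
      using \<open>(nrm (w - m))\<^sup>2 \<le> \<delta>\<close> low[OF that] by linarith
  qed simp
  then show ?thesis using \<open>m \<in> M\<close> by blast
qed

lemma selfadjoint_bounded_below_graph_limit:
  assumes T: "selfadjoint_op sc UNIV ip D T" and c: "0 < c"
    and below: "\<forall>u\<in>D. c * nrm u \<le> nrm (T u)"
    and us: "\<forall>n. us n \<in> D" and Tus: "converges_to (\<lambda>n. T (us n)) t"
  shows "\<exists>u\<in>D. converges_to us u \<and> T u = t"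
proof -
  have lin: "lin_op sc UNIV D T" using T by (rule selfadjoint_op_lin)
  have "\<exists>u. converges_to us u"
  proof (rule converges_if_Cauchy_dominated[OF _ Tus])
    fix m n
    have "c * nrm (us m - us n) \<le> nrm (T (us m - us n))"
      using us below csubspace_diff[OF lin_op_csubspace[OF lin]] by blast
    also have "\<dots> = nrm (T (us m) - T (us n))" using us by (simp add: lin_op_diff[OF lin])
    finally show "nrm (us m - us n) \<le> 1 / c * nrm (T (us m) - T (us n))"
      using c by (simp add: field_simps)
  qed
  then obtain u where u: "converges_to us u" ..
  with selfadjoint_op_graph_closed[OF T us u Tus] show ?thesis by blast
qed

lemma selfadjoint_bounded_below_range_closed:
  assumes T: "selfadjoint_op sc UNIV ip D T" and c: "0 < c"
    and below: "\<forall>u\<in>D. c * nrm u \<le> nrm (T u)"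
  shows "seq_closed (T ` D)"
  unfolding seq_closed_def
proof (intro allI impI, elim conjE)
  fix f l
  assume f: "\<forall>n. f n \<in> T ` D" and l: "converges_to f l"
  have "\<forall>n. \<exists>u. u \<in> D \<and> T u = f n" using f by (metis imageE)
  then obtain us where us: "\<forall>n. us n \<in> D" and Tus: "\<And>n. T (us n) = f n"
    by metis
  have "converges_to (\<lambda>n. T (us n)) l" using l by (simp add: Tus)
  with selfadjoint_bounded_below_graph_limit[OF T c below us] show "l \<in> T ` D" by blast
qed

lemma selfadjoint_bounded_below_orthogonal_range:
  assumes T: "selfadjoint_op sc UNIV ip D T" and c: "0 < c"
    and below: "\<forall>u\<in>D. c * nrm u \<le> nrm (T u)"
    and r: "\<forall>u\<in>D. ip (T u) r = 0"
  shows "r = 0"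
proof -
  have rD: "r \<in> D" using r by (intro selfadjoint_op_adj_domI[OF T, of r 0]) simp
  have "ip u (T r) = 0" if "u \<in> D" for u
    using r that selfadjoint_op_sym[OF T that rD] by simp
  then have "T r = 0" by (rule dense_in_orthogonal_eq_0[OF selfadjoint_op_dense[OF T]])
  then have "c * nrm r \<le> 0" using bspec[OF below rD] by simp
  with c have "nrm r \<le> 0" by (simp add: mult_le_0_iff)
  then show ?thesis by (metis nrm_eq_0_iff nrm_nonneg order_antisym)
qed

lemma selfadjoint_bounded_below_surj:
  assumes T: "selfadjoint_op sc UNIV ip D T" and c: "0 < c"
    and below: "\<forall>u\<in>D. c * nrm u \<le> nrm (T u)"
  shows "\<exists>u\<in>D. T u = w"
proof -
  have M: "csubspace sc (T ` D)"
    using selfadjoint_op_lin[OF T] by (rule lin_op_image_csubspace)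
  obtain m where m: "m \<in> T ` D" and min: "\<forall>m'\<in>T ` D. nrm (w - m) \<le> nrm (w - m')"
    using closest_point_exists[OF M selfadjoint_bounded_below_range_closed[OF T c below]] by blast
  have orth: "ip y (w - m) = 0" if "y \<in> T ` D" for y
    using closest_point_orthogonal[OF M m _ that] min by blast
  have "w - m = 0"
    using orth by (intro selfadjoint_bounded_below_orthogonal_range[OF T c below]) blast
  moreover obtain u where "u \<in> D" and "m = T u" using m by blast
  ultimately show ?thesis by auto
qed

end

lemma op_norm_le:
  assumes "0 \<le> K" and "\<forall>x\<in>D. hnorm ip (T x) \<le> K * hnorm ip x"
  shows "bounded_op ip D T" and "op_norm ip D T \<le> K"
proof -
  show "bounded_op ip D T" using assms(2) unfolding bounded_op_def by blast
  show "op_norm ip D T \<le> K"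
    unfolding op_norm_def using assms by (intro cInf_lower bdd_belowI[of _ 0]) auto
qed

section \<open>The energy space\<close>

locale energy_space = complex_hilbert_space sc ip
  for sc :: "complex \<Rightarrow> 'x::ab_group_add \<Rightarrow> 'x" and ip +
  fixes A S :: "'x \<Rightarrow> 'x" and DA DS :: "'x set" and eps :: real
  assumes A_sa: "selfadjoint_op sc UNIV ip DA A"
    and eps_pos: "0 < eps"
    and A_lower: "\<forall>x\<in>DA. Re (ip x (A x)) \<ge> eps * Re (ip x x)"
    and S_sa: "selfadjoint_op sc UNIV ip DS S"
    and S_sq_dom: "DA = {x\<in>DS. S x \<in> DS}"
    and S_sq: "\<forall>x\<in>DA. S (S x) = A x"
begin

lemma A_lin: "lin_op sc UNIV DA A"
  and S_lin: "lin_op sc UNIV DS S"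
  using A_sa S_sa by (simp_all add: selfadjoint_op_lin)

lemma DA_csubspace: "csubspace sc DA"
  and DS_csubspace: "csubspace sc DS"
  using A_lin S_lin by (simp_all add: lin_op_csubspace)

lemma DA_DS: "x \<in> DA \<Longrightarrow> x \<in> DS"
  and S_DA: "x \<in> DA \<Longrightarrow> S x \<in> DS"
  and S_S: "x \<in> DA \<Longrightarrow> S (S x) = A x"
  using S_sq_dom S_sq by auto

lemma A_bounded_below: "\<forall>u\<in>DA. eps * nrm u \<le> nrm (A u)"
  using A_lower by (simp add: form_bound_imp_nrm_bound nrm_sq)

lemma A_surj: "\<exists>u\<in>DA. A u = w"
  using selfadjoint_bounded_below_surj[OF A_sa eps_pos A_bounded_below] .

lemma S_lower_bound_sq:
  assumes x: "x \<in> DS"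
  shows "eps * (nrm x)\<^sup>2 \<le> (nrm (S x))\<^sup>2"
proof -
  obtain u where u: "u \<in> DA" and x_eq: "x = S (S u)"
    using A_surj[of x] S_S by metis
  have "(nrm x)\<^sup>2 = Re (ip (S x) (S u))"
    using selfadjoint_op_sym[OF S_sa x S_DA[OF u]] x_eq by (simp add: nrm_sq)
  then have Sx: "(nrm x)\<^sup>2 \<le> nrm (S x) * nrm (S u)"
    using Re_ip_le by simp
  have "(nrm (S u))\<^sup>2 = Re (ip u x)"
    using selfadjoint_op_sym[OF S_sa DA_DS[OF u] S_DA[OF u]] x_eq by (simp add: nrm_sq)
  then have "eps * (nrm (S u))\<^sup>2 \<le> eps * nrm u * nrm x"
    using Re_ip_le[of u x] eps_pos by (simp add: mult.assoc)
  also have "\<dots> \<le> (nrm x)\<^sup>2"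
    using A_bounded_below u S_S[OF u] x_eq by (simp add: power2_eq_square mult_right_mono)
  finally have Su: "eps * (nrm (S u))\<^sup>2 \<le> (nrm x)\<^sup>2" .
  have "eps * ((nrm x)\<^sup>2)\<^sup>2 \<le> (nrm (S x))\<^sup>2 * (eps * (nrm (S u))\<^sup>2)"
    using power_mono[OF Sx, of 2] eps_pos by (simp add: power_mult_distrib mult_ac)
  also have "\<dots> \<le> (nrm (S x))\<^sup>2 * (nrm x)\<^sup>2"
    using Su by (intro mult_left_mono) auto
  finally have "(nrm x)\<^sup>2 * (eps * (nrm x)\<^sup>2) \<le> (nrm x)\<^sup>2 * (nrm (S x))\<^sup>2"
    by (simp add: power2_eq_square mult_ac)
  then show ?thesis by (cases "x = 0") simp_all
qed

lemma S_inj: "x \<in> DS \<Longrightarrow> S x = 0 \<Longrightarrow> x = 0"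
  using S_lower_bound_sq[of x] eps_pos by (simp add: mult_le_0_iff)

lemma S_eqD: "x \<in> DS \<Longrightarrow> y \<in> DS \<Longrightarrow> S x = S y \<Longrightarrow> x = y"
  using S_inj[of "x - y"] lin_op_diff[OF S_lin] csubspace_diff[OF DS_csubspace] by fastforce

lemma S_image_DA: "g \<in> DS \<Longrightarrow> \<exists>u\<in>DA. S u = g"
  using A_surj[of "S g"] S_S S_DA S_eqD by metis

lemma S_lower_bound: "\<forall>x\<in>DS. sqrt eps * nrm x \<le> nrm (S x)"
proof
  fix x
  assume x: "x \<in> DS"
  have "sqrt eps * nrm x = sqrt (eps * (nrm x)\<^sup>2)" by (simp add: real_sqrt_mult)
  also have "\<dots> \<le> sqrt ((nrm (S x))\<^sup>2)" using S_lower_bound_sq[OF x] by (rule real_sqrt_le_mono)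
  finally show "sqrt eps * nrm x \<le> nrm (S x)" by simp
qed

lemma S_graph_limit:
  "\<forall>n. g n \<in> DS \<Longrightarrow> converges_to (\<lambda>n. S (g n)) s \<Longrightarrow> \<exists>l\<in>DS. converges_to g l \<and> S l = s"
  using eps_pos by (intro selfadjoint_bounded_below_graph_limit[OF S_sa _ S_lower_bound]) auto

abbreviation nrmY :: "'x \<times> 'x \<Rightarrow> real" where "nrmY \<equiv> hnorm (ipY ip S)"

lemma nrmY_eq: "nrmY \<xi> = sqrt ((nrm (S (fst \<xi>)))\<^sup>2 + (nrm (snd \<xi>))\<^sup>2)"
  unfolding hnorm_def[of "ipY ip S"] ipY_def by (simp add: nrm_sq)

lemma nrmY_nonneg: "0 \<le> nrmY \<xi>"
  by (simp add: nrmY_eq)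

lemma nrmY_ge_fst: "nrm (S (fst \<xi>)) \<le> nrmY \<xi>"
  and nrmY_ge_snd: "nrm (snd \<xi>) \<le> nrmY \<xi>"
  unfolding nrmY_eq by (rule real_le_rsqrt; simp)+

lemma nrmY_le: "nrmY \<xi> \<le> nrm (S (fst \<xi>)) + nrm (snd \<xi>)"
  using sqrt_add_le_add_sqrt[of "(nrm (S (fst \<xi>)))\<^sup>2" "(nrm (snd \<xi>))\<^sup>2"] by (simp add: nrmY_eq)

lemma Y_complete:
  assumes f: "\<forall>n. f n \<in> DS \<times> UNIV"
    and Cauchy: "\<forall>e>0. \<exists>N. \<forall>m\<ge>N. \<forall>n\<ge>N. nrmY (f m - f n) < e"
  shows "\<exists>l\<in>DS \<times> UNIV. (\<lambda>n. nrmY (f n - l)) \<longlonglongrightarrow> 0"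
proof -
  have f1: "\<forall>n. fst (f n) \<in> DS" using f by (auto simp: mem_Times_iff)
  have S_diff: "S (fst (f m)) - S (fst (f n)) = S (fst (f m - f n))" for m n
    using f1 by (simp add: lin_op_diff[OF S_lin])
  have "\<forall>e>0. \<exists>N. \<forall>m\<ge>N. \<forall>n\<ge>N. nrm (S (fst (f m)) - S (fst (f n))) < e"
    using Cauchy unfolding S_diff by (meson nrmY_ge_fst le_less_trans)
  then have "\<exists>s. converges_to (\<lambda>n. S (fst (f n))) s" by (rule Cauchy_converges)
  then obtain s where s: "converges_to (\<lambda>n. S (fst (f n))) s" ..
  obtain l1 where l1: "l1 \<in> DS" "converges_to (\<lambda>n. fst (f n)) l1" "S l1 = s"
    using S_graph_limit[OF f1 s] by blast
  have "\<forall>e>0. \<exists>N. \<forall>m\<ge>N. \<forall>n\<ge>N. nrm (snd (f m) - snd (f n)) < e"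
    using Cauchy by (metis nrmY_ge_snd le_less_trans snd_diff)
  then have "\<exists>l2. converges_to (\<lambda>n. snd (f n)) l2" by (rule Cauchy_converges)
  then obtain l2 where l2: "converges_to (\<lambda>n. snd (f n)) l2" ..
  have bound: "nrmY (f n - (l1, l2)) \<le> nrm (S (fst (f n)) - s) + nrm (snd (f n) - l2)" for n
    using nrmY_le[of "f n - (l1, l2)"] f1 l1 by (simp add: lin_op_diff[OF S_lin])
  have "(\<lambda>n. nrm (S (fst (f n)) - s) + nrm (snd (f n) - l2)) \<longlonglongrightarrow> 0"
    using s l2 unfolding converges_to_def by (rule tendsto_add_zero)
  then have "(\<lambda>n. nrmY (f n - (l1, l2))) \<longlonglongrightarrow> 0"
    by (rule Lim_null_comparison[OF always_eventually, rotated]) (simp add: bound nrmY_nonneg)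
  then show ?thesis using l1 by blast
qed

lemma Y_hilbert: "hilbert_space (scaleY sc) (DS \<times> UNIV) (ipY ip S)"
  unfolding hilbert_space_def
proof (intro conjI ballI allI impI)
  show "vector_space (scaleY sc)"
    by unfold_locales (auto simp: scaleY_def vs.scale_right_distrib vs.scale_left_distrib)
  show "csubspace (scaleY sc) (DS \<times> UNIV)"
    using csubspace_Times[OF DS_csubspace csubspace_UNIV] .
next
  fix x y z :: "'x \<times> 'x"
  assume "x \<in> DS \<times> UNIV" "y \<in> DS \<times> UNIV" "z \<in> DS \<times> UNIV"
  then show "ipY ip S x (y + z) = ipY ip S x y + ipY ip S x z"
    by (auto simp: ipY_def lin_op_add[OF S_lin] ip_add_right mem_Times_iff)
next
  fix x y :: "'x \<times> 'x" and c
  assume "x \<in> DS \<times> UNIV" "y \<in> DS \<times> UNIV"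
  then show "ipY ip S x (scaleY sc c y) = c * ipY ip S x y"
    by (auto simp: ipY_def scaleY_def lin_op_scale[OF S_lin] ip_scale_right mem_Times_iff
        algebra_simps)
next
  fix x y :: "'x \<times> 'x"
  show "ipY ip S y x = cnj (ipY ip S x y)"
    unfolding ipY_def using ip_cnj_commute[of "S (fst x)" "S (fst y)"] ip_cnj_commute[of "snd x" "snd y"]
    by simp
next
  fix x :: "'x \<times> 'x"
  show "0 \<le> Re (ipY ip S x x)"
    unfolding ipY_def using ip_self_nonneg by (simp add: add_nonneg_nonneg)
next
  fix x :: "'x \<times> 'x"
  assume x: "x \<in> DS \<times> UNIV" and x0: "ipY ip S x x = 0"
  have "(nrm (S (fst x)))\<^sup>2 + (nrm (snd x))\<^sup>2 = 0"
    using arg_cong[OF x0, of Re] unfolding ipY_def by (simp add: nrm_sq)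
  then have "S (fst x) = 0" and "snd x = 0"
    by (simp_all add: add_nonneg_eq_0_iff)
  with x S_inj show "x = 0" by (auto simp: prod_eq_iff mem_Times_iff)
next
  fix f :: "nat \<Rightarrow> 'x \<times> 'x"
  assume "(\<forall>n. f n \<in> DS \<times> UNIV) \<and> (\<forall>e>0. \<exists>N. \<forall>m\<ge>N. \<forall>n\<ge>N. nrmY (f m - f n) < e)"
  then show "\<exists>l\<in>DS \<times> UNIV. (\<lambda>n. nrmY (f n - l)) \<longlonglongrightarrow> 0"
    using Y_complete by blast
qed

lemma Y_dense: "dense_in (ipY ip S) (DS \<times> UNIV) (DA \<times> DS)"
  unfolding dense_in_def
proof (intro conjI ballI allI impI)
  show "DA \<times> DS \<subseteq> DS \<times> UNIV" using DA_DS by auto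
next
  fix x :: "'x \<times> 'x" and e :: real
  assume x: "x \<in> DS \<times> UNIV" and e: "e > 0"
  obtain x1 x2 where x_eq: "x = (x1, x2)" by (cases x)
  have x1: "x1 \<in> DS" using x x_eq by auto
  obtain g where g: "g \<in> DS" "nrm (S x1 - g) < e / 2"
    using selfadjoint_op_dense[OF S_sa] e unfolding dense_in_def by (meson half_gt_zero UNIV_I)
  obtain u where u: "u \<in> DA" "S u = g" using S_image_DA[OF g(1)] by blast
  obtain y2 where y2: "y2 \<in> DS" "nrm (x2 - y2) < e / 2"
    using selfadjoint_op_dense[OF S_sa] e unfolding dense_in_def by (meson half_gt_zero UNIV_I)
  have "nrmY (x - (u, y2)) \<le> nrm (S (x1 - u)) + nrm (x2 - y2)"
    using nrmY_le[of "x - (u, y2)"] by (simp add: x_eq)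
  also have "nrm (S (x1 - u)) = nrm (S x1 - g)"
    using x1 u DA_DS by (simp add: lin_op_diff[OF S_lin])
  finally have "nrmY (x - (u, y2)) < e" using g(2) y2(2) by linarith
  then show "\<exists>y\<in>DA \<times> DS. nrmY (x - y) < e" using u y2 by blast
qed

section \<open>Operators on the energy space\<close>

definition opHB :: "('x \<Rightarrow> 'x) \<Rightarrow> 'x \<times> 'x \<Rightarrow> 'x \<times> 'x" where
  "opHB B \<xi> = opH sc A \<xi> + opBhat B \<xi>"

lemma opHB_apply: "opHB B (x1, x2) = (sc (- \<i>) x2, sc \<i> (A x1) - B x2)"
  by (simp add: opHB_def opH_def opBhat_def)

lemma opH_eq_opHB: "opH sc A = opHB (\<lambda>_. 0)"
  by (rule ext) (simp add: opHB_def opBhat_def zero_prod_def)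

lemma zero_symmetric_op: "symmetric_op sc UNIV ip DS (\<lambda>_. 0)"
  using DS_csubspace selfadjoint_op_dense[OF S_sa] by (simp add: symmetric_op_def lin_op_def)

lemma S_minus_scale: "x \<in> DS \<Longrightarrow> S (- sc c x) = - sc c (S x)"
  using lin_op_minus[OF S_lin csubspace_scale[OF DS_csubspace]] lin_op_scale[OF S_lin] by simp

lemma opHB_lin:
  assumes B: "lin_op sc UNIV DS B"
  shows "lin_op (scaleY sc) (DS \<times> UNIV) (DA \<times> DS) (opHB B)"
  unfolding lin_op_def
proof (intro conjI ballI allI)
  show "csubspace (scaleY sc) (DA \<times> DS)"
    using csubspace_Times[OF DA_csubspace DS_csubspace] .
  show "DA \<times> DS \<subseteq> DS \<times> UNIV" using DA_DS by auto
  show "opHB B ` (DA \<times> DS) \<subseteq> DS \<times> UNIV"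
    using DS_csubspace by (auto simp: opHB_apply intro!: csubspace_minus csubspace_scale)
next
  fix x y :: "'x \<times> 'x"
  assume "x \<in> DA \<times> DS" and "y \<in> DA \<times> DS"
  then show "opHB B (x + y) = opHB B x + opHB B y"
    by (auto simp: mem_Times_iff opHB_def opH_def opBhat_def lin_op_add[OF A_lin]
        lin_op_add[OF B] vs.scale_right_distrib)
next
  fix c and x :: "'x \<times> 'x"
  assume "x \<in> DA \<times> DS"
  then show "opHB B (scaleY sc c x) = scaleY sc c (opHB B x)"
    by (auto simp: mem_Times_iff opHB_def opH_def opBhat_def scaleY_def lin_op_scale[OF A_lin]
        lin_op_scale[OF B] vs.scale_right_diff_distrib mult.commute)
qed

lemma opHB_sym:
  assumes B_sym: "\<forall>x\<in>DS. \<forall>y\<in>DS. ip (B x) y = ip x (B y)"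
    and x: "x \<in> DA \<times> DS" and y: "y \<in> DA \<times> DS"
  shows "ipY ip S (opHB B x) y = ipY ip S x (opHB B y)"
proof -
  obtain x1 x2 y1 y2 where xy: "x = (x1, x2)" "y = (y1, y2)" by (cases x, cases y)
  have h: "x1 \<in> DA" "x2 \<in> DS" "y1 \<in> DA" "y2 \<in> DS" using x y xy by auto
  have "ip (S x2) (S y1) = ip x2 (A y1)"
    using selfadjoint_op_sym[OF S_sa h(2) S_DA[OF h(3)]] S_S[OF h(3)] by simp
  moreover have "ip (A x1) y2 = ip (S x1) (S y2)"
    using selfadjoint_op_sym[OF S_sa S_DA[OF h(1)] h(4)] S_S[OF h(1)] by simp
  moreover have "ip (B x2) y2 = ip x2 (B y2)" using B_sym h by blast
  ultimately show ?thesis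
    using h by (simp add: xy opHB_apply ipY_def S_minus_scale ip_scale_left ip_scale_right
        ip_diff_left ip_diff_right ip_minus_left ip_minus_right)
qed

lemma opHB_adjoint_snd:
  assumes B: "lin_op sc UNIV DS B" and z1: "z1 \<in> DS"
    and adj: "\<forall>x\<in>DA \<times> DS. ipY ip S (opHB B x) (y1, y2) = ipY ip S x (z1, z2)"
  shows "y2 = sc \<i> z1"
proof -
  \<comment> \<open>testing with \<open>(x1, 0)\<close> shows \<open>-\<i> y2 - z1 \<perp> range A\<close>\<close>
  have "\<forall>x1\<in>DA. ip (A x1) (sc (- \<i>) y2 - z1) = 0"
  proof
    fix x1
    assume x1: "x1 \<in> DA"
    have "- \<i> * ip (A x1) y2 = ip (S x1) (S z1)"
      using bspec[OF adj, of "(x1, 0)"] x1 csubspace_zero[OF DS_csubspace]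
      by (simp add: opHB_apply ipY_def lin_op_zero[OF B] lin_op_zero[OF S_lin] ip_scale_left)
    moreover have "ip (S x1) (S z1) = ip (A x1) z1"
      using selfadjoint_op_sym[OF S_sa S_DA[OF x1] z1] S_S[OF x1] by simp
    ultimately show "ip (A x1) (sc (- \<i>) y2 - z1) = 0"
      by (simp add: ip_diff_right ip_scale_right ip_minus_right)
  qed
  then have "sc (- \<i>) y2 - z1 = 0"
    by (rule selfadjoint_bounded_below_orthogonal_range[OF A_sa eps_pos A_bounded_below])
  then have "z1 = sc (- \<i>) y2" by simp
  then show "y2 = sc \<i> z1" by simp
qed

lemma opHB_adj_domD:
  assumes B: "symmetric_op sc UNIV ip DS B"
    and y: "y \<in> DS \<times> UNIV" and z: "z \<in> DS \<times> UNIV"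
    and adj: "\<forall>x\<in>DA \<times> DS. ipY ip S (opHB B x) y = ipY ip S x z"
  shows "y \<in> DA \<times> DS"
proof -
  obtain y1 y2 z1 z2 where yz: "y = (y1, y2)" "z = (z1, z2)" by (cases y, cases z)
  have y1: "y1 \<in> DS" and z1: "z1 \<in> DS" using y z yz by auto
  have B_lin: "lin_op sc UNIV DS B" using B by (simp add: symmetric_op_def)
  have "y2 = sc \<i> z1" using opHB_adjoint_snd[OF B_lin z1] adj yz by simp
  then have y2: "y2 \<in> DS" using z1 csubspace_scale[OF DS_csubspace] by simp
  \<comment> \<open>testing with \<open>(0, x2)\<close> shows \<open>\<i> S y1 \<in> D(S\<^sup>*) = D(S)\<close>, so \<open>y1 \<in> D(A)\<close>\<close>
  have "ip (S x2) (sc \<i> (S y1)) = ip x2 (z2 + B y2)" if x2: "x2 \<in> DS" for x2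
  proof -
    have "\<i> * ip (S x2) (S y1) - ip (B x2) y2 = ip x2 z2"
      using bspec[OF adj, of "(0, x2)"] x2 csubspace_zero[OF DA_csubspace]
      by (simp add: yz opHB_apply ipY_def lin_op_zero[OF A_lin] lin_op_zero[OF S_lin]
          S_minus_scale ip_scale_left ip_minus_left ip_diff_left)
    moreover have "ip (B x2) y2 = ip x2 (B y2)" using B x2 y2 by (simp add: symmetric_op_def)
    ultimately show ?thesis by (simp add: ip_scale_right ip_add_right algebra_simps)
  qed
  then have "sc \<i> (S y1) \<in> DS" by (rule selfadjoint_op_adj_domI[OF S_sa])
  then have "S y1 \<in> DS" using csubspace_scale[OF DS_csubspace, of "sc \<i> (S y1)" "- \<i>"] by simp
  then show ?thesis using S_sq_dom y1 y2 yz by simp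
qed

lemma opHB_selfadjoint:
  assumes B: "symmetric_op sc UNIV ip DS B"
  shows "selfadjoint_op (scaleY sc) (DS \<times> UNIV) (ipY ip S) (DA \<times> DS) (opHB B)"
proof -
  have B_lin: "lin_op sc UNIV DS B" and B_sym: "\<forall>x\<in>DS. \<forall>y\<in>DS. ip (B x) y = ip x (B y)"
    using B by (simp_all add: symmetric_op_def)
  have "adj_dom (DS \<times> UNIV) (ipY ip S) (DA \<times> DS) (opHB B) = DA \<times> DS"
  proof
    show "adj_dom (DS \<times> UNIV) (ipY ip S) (DA \<times> DS) (opHB B) \<subseteq> DA \<times> DS"
    proof
      fix y
      assume "y \<in> adj_dom (DS \<times> UNIV) (ipY ip S) (DA \<times> DS) (opHB B)"
      then obtain z where "y \<in> DS \<times> UNIV" "z \<in> DS \<times> UNIV"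
        and "\<forall>x\<in>DA \<times> DS. ipY ip S (opHB B x) y = ipY ip S x z"
        unfolding adj_dom_def by blast
      then show "y \<in> DA \<times> DS" by (rule opHB_adj_domD[OF B])
    qed
    show "DA \<times> DS \<subseteq> adj_dom (DS \<times> UNIV) (ipY ip S) (DA \<times> DS) (opHB B)"
    proof
      fix y
      assume y: "y \<in> DA \<times> DS"
      have "opHB B y \<in> DS \<times> UNIV" using opHB_lin[OF B_lin] y by (rule lin_op_image)
      moreover have "y \<in> DS \<times> UNIV" using y DA_DS by auto
      ultimately show "y \<in> adj_dom (DS \<times> UNIV) (ipY ip S) (DA \<times> DS) (opHB B)"
        unfolding adj_dom_def using opHB_sym[OF B_sym _ y]
        by (intro CollectI conjI bexI[of _ "opHB B y"]) auto
    qed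
  qed
  then show ?thesis
    unfolding selfadjoint_op_def symmetric_op_def
    using opHB_lin[OF B_lin] Y_dense opHB_sym[OF B_sym] by blast
qed

lemma Y_converges_components:
  assumes u: "\<forall>n. u n \<in> DS" and x1: "x1 \<in> DS"
    and lim: "(\<lambda>n. nrmY ((u n, v n) - (x1, x2))) \<longlonglongrightarrow> 0"
  shows "converges_to (\<lambda>n. S (u n)) (S x1)" and "converges_to v x2"
proof -
  show "converges_to (\<lambda>n. S (u n)) (S x1)"
  proof (rule converges_toI_dominated[OF _ lim])
    show "nrm (S (u n) - S x1) \<le> nrmY ((u n, v n) - (x1, x2))" for n
      using nrmY_ge_fst[of "(u n, v n) - (x1, x2)"] u x1 by (simp add: lin_op_diff[OF S_lin])
  qed
  show "converges_to v x2"
  proof (rule converges_toI_dominated[OF _ lim])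
    show "nrm (v n - x2) \<le> nrmY ((u n, v n) - (x1, x2))" for n
      using nrmY_ge_snd[of "(u n, v n) - (x1, x2)"] by simp
  qed
qed

lemma relatively_bounded_converges:
  assumes B: "lin_op sc UNIV DS B"
    and bound: "\<forall>x\<in>DS. (nrm (B x))\<^sup>2 \<le> a\<^sup>2 * (nrm (S x))\<^sup>2 + b\<^sup>2 * (nrm x)\<^sup>2"
    and g: "\<forall>n. g n \<in> DS" and x: "x \<in> DS"
    and g_x: "converges_to g x" and Sg_Sx: "converges_to (\<lambda>n. S (g n)) (S x)"
  shows "converges_to (\<lambda>n. B (g n)) (B x)"
proof (rule converges_toI_dominated)
  fix n
  have "g n - x \<in> DS" using g x by (simp add: csubspace_diff[OF DS_csubspace])
  from bspec[OF bound this]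
  have "(nrm (B (g n) - B x))\<^sup>2 \<le> a\<^sup>2 * (nrm (S (g n) - S x))\<^sup>2 + b\<^sup>2 * (nrm (g n - x))\<^sup>2"
    using g x by (simp add: lin_op_diff[OF B] lin_op_diff[OF S_lin])
  also have "\<dots> \<le> (\<bar>a\<bar> * nrm (S (g n) - S x) + \<bar>b\<bar> * nrm (g n - x))\<^sup>2"
    by (simp add: power2_sum power_mult_distrib)
  finally show "nrm (B (g n) - B x) \<le> \<bar>a\<bar> * nrm (S (g n) - S x) + \<bar>b\<bar> * nrm (g n - x)"
    by (rule power2_le_imp_le) simp
next
  show "(\<lambda>n. \<bar>a\<bar> * nrm (S (g n) - S x) + \<bar>b\<bar> * nrm (g n - x)) \<longlonglongrightarrow> 0"
    using Sg_Sx g_x unfolding converges_to_def by (intro tendsto_add_zero tendsto_mult_right_zero)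
qed

lemma S_graph_limit_minus_i:
  assumes v: "\<forall>n. v n \<in> DS" and v_x: "converges_to v x"
    and Sv: "converges_to (\<lambda>n. S (- sc \<i> (v n))) (S y)" and y: "y \<in> DS"
  shows "x \<in> DS" and "- sc \<i> x = y" and "converges_to (\<lambda>n. S (v n)) (S x)"
proof -
  from converges_to_scale[OF Sv]
  have "converges_to (\<lambda>n. sc \<i> (S (- sc \<i> (v n)))) (sc \<i> (S y))" .
  then have Sv': "converges_to (\<lambda>n. S (v n)) (sc \<i> (S y))"
    using v by (simp add: S_minus_scale)
  have x: "x \<in> DS" and Sx: "S x = sc \<i> (S y)"
    using selfadjoint_op_graph_closed[OF S_sa v v_x Sv'] by simp_all
  show "x \<in> DS" by (rule x)
  show "converges_to (\<lambda>n. S (v n)) (S x)" using Sv' Sx by simp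
  have "S (- sc \<i> x) = S y" using S_minus_scale[OF x] Sx by simp
  then show "- sc \<i> x = y"
    using S_eqD csubspace_minus[OF DS_csubspace csubspace_scale[OF DS_csubspace x]] y by blast
qed

lemma opHB_closed:
  assumes B: "lin_op sc UNIV DS B"
    and bound: "\<forall>x\<in>DS. (nrm (B x))\<^sup>2 \<le> a\<^sup>2 * (nrm (S x))\<^sup>2 + b\<^sup>2 * (nrm x)\<^sup>2"
  shows "closed_op (ipY ip S) (DS \<times> UNIV) (DA \<times> DS) (opHB B)"
  unfolding closed_op_def
proof (intro allI impI, elim conjE)
  fix f and x y :: "'x \<times> 'x"
  assume f: "\<forall>n. f n \<in> DA \<times> DS" and x: "x \<in> DS \<times> UNIV" and y: "y \<in> DS \<times> UNIV"
    and f_x: "(\<lambda>n. nrmY (f n - x)) \<longlonglongrightarrow> 0" and Hf_y: "(\<lambda>n. nrmY (opHB B (f n) - y)) \<longlonglongrightarrow> 0"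
  obtain x1 x2 y1 y2 where xy: "x = (x1, x2)" "y = (y1, y2)" by (cases x, cases y)
  define u v where "u n = fst (f n)" and "v n = snd (f n)" for n
  have f_eq: "f n = (u n, v n)" for n by (simp add: u_def v_def)
  have u: "\<forall>n. u n \<in> DA" and uS: "\<forall>n. u n \<in> DS" and v: "\<forall>n. v n \<in> DS"
    using f DA_DS by (auto simp: f_eq mem_Times_iff)
  have x1: "x1 \<in> DS" and y1: "y1 \<in> DS" using x y xy by auto
  have Su_Sx1: "converges_to (\<lambda>n. S (u n)) (S x1)" and v_x2: "converges_to v x2"
    using Y_converges_components[OF uS x1] f_x by (simp_all add: f_eq xy)
  have "\<forall>n. - sc \<i> (v n) \<in> DS" using v by (simp add: csubspace_minus csubspace_scale DS_csubspace)
  then have S_Hv: "converges_to (\<lambda>n. S (- sc \<i> (v n))) (S y1)"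
    and Au_Bv: "converges_to (\<lambda>n. sc \<i> (A (u n)) - B (v n)) y2"
    using Y_converges_components[OF _ y1] Hf_y by (simp_all add: f_eq xy opHB_apply)
  note x2 = S_graph_limit_minus_i[OF v v_x2 S_Hv y1]
  have "converges_to (\<lambda>n. B (v n)) (B x2)"
    using relatively_bounded_converges[OF B bound v x2(1) v_x2 x2(3)] .
  from converges_to_add[OF Au_Bv this]
  have "converges_to (\<lambda>n. sc \<i> (A (u n))) (y2 + B x2)" by simp
  from converges_to_scale[OF this, of "- \<i>"]
  have "converges_to (\<lambda>n. A (u n)) (sc (- \<i>) (y2 + B x2))" by simp
  then obtain x1' where x1': "x1' \<in> DA" "converges_to u x1'" "A x1' = sc (- \<i>) (y2 + B x2)"
    using selfadjoint_bounded_below_graph_limit[OF A_sa eps_pos A_bounded_below u] by blast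
  have "S x1' = S x1" using selfadjoint_op_graph_closed[OF S_sa uS x1'(2) Su_Sx1] by simp
  then have "x1' = x1" using S_eqD DA_DS[OF x1'(1)] x1 by blast
  then show "x \<in> DA \<times> DS \<and> opHB B x = y"
    using x1' x2(1,2) by (simp add: xy opHB_apply)
qed

lemma opBhat_lin:
  assumes B: "lin_op sc UNIV DS B"
  shows "lin_op (scaleY sc) (DS \<times> UNIV) (DA \<times> DS) (opBhat B)"
  unfolding lin_op_def
proof (intro conjI ballI allI)
  show "csubspace (scaleY sc) (DA \<times> DS)"
    using csubspace_Times[OF DA_csubspace DS_csubspace] .
  show "DA \<times> DS \<subseteq> DS \<times> UNIV" using DA_DS by auto
  show "opBhat B ` (DA \<times> DS) \<subseteq> DS \<times> UNIV"
    using csubspace_zero[OF DS_csubspace] by (auto simp: opBhat_def)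
next
  fix x y :: "'x \<times> 'x"
  assume "x \<in> DA \<times> DS" and "y \<in> DA \<times> DS"
  then show "opBhat B (x + y) = opBhat B x + opBhat B y"
    by (auto simp: opBhat_def lin_op_add[OF B] mem_Times_iff)
next
  fix c and x :: "'x \<times> 'x"
  assume "x \<in> DA \<times> DS"
  then show "opBhat B (scaleY sc c x) = scaleY sc c (opBhat B x)"
    by (auto simp: opBhat_def scaleY_def lin_op_scale[OF B] mem_Times_iff)
qed

lemma opBhat_sym:
  assumes B: "symmetric_op sc UNIV ip DS B"
  shows "symmetric_op (scaleY sc) (DS \<times> UNIV) (ipY ip S) (DA \<times> DS) (opBhat B)"
proof -
  have "\<forall>x\<in>DA \<times> DS. \<forall>y\<in>DA \<times> DS. ipY ip S (opBhat B x) y = ipY ip S x (opBhat B y)"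
    using B lin_op_zero[OF S_lin]
    by (auto simp: symmetric_op_def opBhat_def ipY_def ip_minus_left ip_minus_right mem_Times_iff)
  then show ?thesis
    using B opBhat_lin Y_dense by (simp add: symmetric_op_def)
qed

lemma nrmY_opBhat: "nrmY (opBhat B \<xi>) = nrm (B (snd \<xi>))"
  using lin_op_zero[OF S_lin] by (simp add: nrmY_eq opBhat_def nrm_minus)

lemma opBhat_bounded:
  assumes B: "bounded_op ip DS B"
  shows "bounded_op (ipY ip S) (DA \<times> DS) (opBhat B)"
    and "op_norm (ipY ip S) (DA \<times> DS) (opBhat B) \<le> op_norm ip DS B"
proof -
  note norm_B = op_norm_nonneg_and_bound[OF B]
  have bound: "\<forall>x\<in>DA \<times> DS. nrmY (opBhat B x) \<le> op_norm ip DS B * nrmY x"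
  proof
    fix x
    assume "x \<in> DA \<times> DS"
    then have "snd x \<in> DS" by auto
    then have "nrmY (opBhat B x) \<le> op_norm ip DS B * nrm (snd x)"
      unfolding nrmY_opBhat by (rule norm_B(2))
    also have "\<dots> \<le> op_norm ip DS B * nrmY x"
      using nrmY_ge_snd norm_B(1) by (rule mult_left_mono)
    finally show "nrmY (opBhat B x) \<le> op_norm ip DS B * nrmY x" .
  qed
  show "bounded_op (ipY ip S) (DA \<times> DS) (opBhat B)"
    by (rule op_norm_le(1)[OF norm_B(1) bound])
  show "op_norm (ipY ip S) (DA \<times> DS) (opBhat B) \<le> op_norm ip DS B"
    by (rule op_norm_le(2)[OF norm_B(1) bound])
qed

lemma opV_lin:
  assumes C: "lin_op sc UNIV DS C"
  shows "lin_op (scaleY sc) (DS \<times> UNIV) (DS \<times> UNIV) (opV sc C)"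
  unfolding lin_op_def
proof (intro conjI ballI allI)
  show "csubspace (scaleY sc) (DS \<times> UNIV)"
    using csubspace_Times[OF DS_csubspace csubspace_UNIV] .
  show "DS \<times> UNIV \<subseteq> DS \<times> UNIV" by simp
  show "opV sc C ` (DS \<times> UNIV) \<subseteq> DS \<times> UNIV"
    using csubspace_zero[OF DS_csubspace] by (auto simp: opV_def)
next
  fix x y :: "'x \<times> 'x"
  assume "x \<in> DS \<times> UNIV" and "y \<in> DS \<times> UNIV"
  then show "opV sc C (x + y) = opV sc C x + opV sc C y"
    by (auto simp: opV_def lin_op_add[OF C] mem_Times_iff vs.scale_right_distrib)
next
  fix c and x :: "'x \<times> 'x"
  assume "x \<in> DS \<times> UNIV"
  then show "opV sc C (scaleY sc c x) = scaleY sc c (opV sc C x)"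
    by (auto simp: opV_def scaleY_def lin_op_scale[OF C] mem_Times_iff mult.commute)
qed

lemma nrmY_opV: "nrmY (opV sc C \<xi>) = nrm (C (fst \<xi>))"
  using lin_op_zero[OF S_lin] by (simp add: nrmY_eq opV_def nrm_scale)

lemma opV_bound:
  assumes C_bound: "\<forall>x\<in>DS. (nrm (C x))\<^sup>2 \<le> c\<^sup>2 * (nrm (S x))\<^sup>2 + d\<^sup>2 * (nrm x)\<^sup>2"
    and x: "x \<in> DS \<times> UNIV"
  shows "nrmY (opV sc C x) \<le> sqrt (c\<^sup>2 + d\<^sup>2 / eps) * nrmY x"
proof -
  have x1: "fst x \<in> DS" using x by auto
  have K: "0 \<le> c\<^sup>2 + d\<^sup>2 / eps" using eps_pos by simp
  have "(nrm (C (fst x)))\<^sup>2 \<le> c\<^sup>2 * (nrm (S (fst x)))\<^sup>2 + d\<^sup>2 * (nrm (fst x))\<^sup>2"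
    using C_bound x1 by blast
  also have "\<dots> \<le> c\<^sup>2 * (nrm (S (fst x)))\<^sup>2 + d\<^sup>2 * ((nrm (S (fst x)))\<^sup>2 / eps)"
    using S_lower_bound_sq[OF x1] eps_pos
    by (intro add_left_mono mult_left_mono) (auto simp: field_simps)
  also have "\<dots> = (c\<^sup>2 + d\<^sup>2 / eps) * (nrm (S (fst x)))\<^sup>2" by (simp add: algebra_simps)
  finally have "nrm (C (fst x)) \<le> sqrt ((c\<^sup>2 + d\<^sup>2 / eps) * (nrm (S (fst x)))\<^sup>2)"
    by (rule real_le_rsqrt)
  also have "\<dots> = sqrt (c\<^sup>2 + d\<^sup>2 / eps) * nrm (S (fst x))"
    using K by (simp add: real_sqrt_mult)
  also have "\<dots> \<le> sqrt (c\<^sup>2 + d\<^sup>2 / eps) * nrmY x"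
    using nrmY_ge_fst by (rule mult_left_mono) (simp add: K)
  finally show ?thesis by (simp add: nrmY_opV)
qed

end

theorem theorem3:
  fixes sc :: "complex \<Rightarrow> 'x::ab_group_add \<Rightarrow> 'x"
    and ip :: "'x \<Rightarrow> 'x \<Rightarrow> complex"
    and A S B C :: "'x \<Rightarrow> 'x"
    and DA DS :: "'x set"
    and \<epsilon> a b c d :: real
  assumes X_hilbert: "hilbert_space sc UNIV ip"
    and X_nontrivial: "\<exists>x::'x. x \<noteq> 0"
    and A_sa: "selfadjoint_op sc UNIV ip DA A"
    and eps_pos: "0 < \<epsilon>"
    and A_lower: "\<forall>x\<in>DA. Re (ip x (A x)) \<ge> \<epsilon> * Re (ip x x)"
    and S_sa: "selfadjoint_op sc UNIV ip DS S"
    and S_pos: "\<forall>x\<in>DS. Re (ip x (S x)) \<ge> 0"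
    and S_sq_dom: "DA = {x\<in>DS. S x \<in> DS}"
    and S_sq: "\<forall>x\<in>DA. S (S x) = A x"
    and B_lin: "lin_op sc UNIV DS B"
    and a_range: "0 \<le> a" "a < 1"
    and B_bound: "\<forall>x\<in>DS. (hnorm ip (B x))\<^sup>2 \<le> a\<^sup>2 * (hnorm ip (S x))\<^sup>2 + b\<^sup>2 * (hnorm ip x)\<^sup>2"
    and C_lin: "lin_op sc UNIV DS C"
    and C_bound: "\<forall>x\<in>DS. (hnorm ip (C x))\<^sup>2 \<le> c\<^sup>2 * (hnorm ip (S x))\<^sup>2 + d\<^sup>2 * (hnorm ip x)\<^sup>2"
  shows
    "hilbert_space (scaleY sc) (DS \<times> UNIV) (ipY ip S)
     \<and> selfadjoint_op (scaleY sc) (DS \<times> UNIV) (ipY ip S) (DA \<times> DS) (opH sc A)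
     \<and> lin_op (scaleY sc) (DS \<times> UNIV) (DA \<times> DS) (opBhat B)
     \<and> (symmetric_op sc UNIV ip DS B \<longrightarrow>
          symmetric_op (scaleY sc) (DS \<times> UNIV) (ipY ip S) (DA \<times> DS) (opBhat B))
     \<and> (bounded_op ip DS B \<longrightarrow>
          bounded_op (ipY ip S) (DA \<times> DS) (opBhat B)
          \<and> op_norm (ipY ip S) (DA \<times> DS) (opBhat B) \<le> op_norm ip DS B)
     \<and> closed_op (ipY ip S) (DS \<times> UNIV) (DA \<times> DS) (\<lambda>\<xi>. opH sc A \<xi> + opBhat B \<xi>)
     \<and> (symmetric_op sc UNIV ip DS B \<longrightarrow>
          selfadjoint_op (scaleY sc) (DS \<times> UNIV) (ipY ip S) (DA \<times> DS)
             (\<lambda>\<xi>. opH sc A \<xi> + opBhat B \<xi>))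
     \<and> lin_op (scaleY sc) (DS \<times> UNIV) (DS \<times> UNIV) (opV sc C)
     \<and> bounded_op (ipY ip S) (DS \<times> UNIV) (opV sc C)
     \<and> op_norm (ipY ip S) (DS \<times> UNIV) (opV sc C) \<le> sqrt (c\<^sup>2 + d\<^sup>2 / \<epsilon>)"
proof -
  interpret energy_space sc ip A S DA DS \<epsilon>
    by unfold_locales (fact X_hilbert A_sa eps_pos A_lower S_sa S_sq_dom S_sq)+
  have HB: "(\<lambda>\<xi>. opH sc A \<xi> + opBhat B \<xi>) = opHB B"
    by (simp add: opHB_def [abs_def])
  have V: "\<forall>x\<in>DS \<times> UNIV. nrmY (opV sc C x) \<le> sqrt (c\<^sup>2 + d\<^sup>2 / \<epsilon>) * nrmY x"
    using opV_bound[OF C_bound] by blast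
  have K: "0 \<le> sqrt (c\<^sup>2 + d\<^sup>2 / \<epsilon>)"
    using eps_pos by simp
  show ?thesis
    unfolding HB
    using Y_hilbert opHB_selfadjoint[OF zero_symmetric_op] opBhat_lin[OF B_lin] opBhat_sym
      opBhat_bounded opHB_closed[OF B_lin B_bound] opHB_selfadjoint opV_lin[OF C_lin]
      op_norm_le[OF K V]
    by (simp add: opH_eq_opHB)
qed

end
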